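(* Let $\boldsymbol\mu=(\mu^{(1)},\ldots,\mu^{(n)})$ be an $I$-tuple of partitions, not all zero, where $\mu^{(i)}$ has $m_a^{(i)}$ rows of length $a$. Put $R(\mu^{(i)})=\{(a,u)\mid a>0,\ 1\le u\le m_a^{(i)}\}$, totally ordered lexicographically, and $$P(\boldsymbol\mu)=2\sum_{i\in I}\sum_{\substack{(a,u),(b,v)\in R(\mu^{(i)})\\(a,u)<(b,v)}}\min\{a,b\}-\sum_{i<j}\sum_{\substack{(a,u)\in R(\mu^{(i)})\\(b,v)\in R(\mu^{(j)})}}\min\{|c_{ji}|a,|c_{ij}|b\}.$$ Then $P(\boldsymbol\mu)>-\sum_{i\in I}|\mu^{(i)}|$.
   Context: $(c_{ij})_{i,j\in I}$, $I=\{1,\dots,n\}$, is the Cartan matrix of a complex simple Lie algebra (finite type), with $I$ ordered naturally; $|\mu|$ is the size of a partition $\mu$. *)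

theory Defs
  imports Complex_Main
begin

text \<open>Index set I = {1..n}; a matrix is a function c :: nat => nat => int (only entries
  with indices in {1..n} matter).\<close>

definition generalized_cartan :: "nat \<Rightarrow> (nat \<Rightarrow> nat \<Rightarrow> int) \<Rightarrow> bool" where
  "generalized_cartan n c \<longleftrightarrow>
     (\<forall>i\<in>{1..n}. c i i = 2) \<and>
     (\<forall>i\<in>{1..n}. \<forall>j\<in>{1..n}. i \<noteq> j \<longrightarrow> c i j \<le> 0 \<and> (c i j = 0 \<longleftrightarrow> c j i = 0))"

definition indecomposable_matrix :: "nat \<Rightarrow> (nat \<Rightarrow> nat \<Rightarrow> int) \<Rightarrow> bool" where
  "indecomposable_matrix n c \<longleftrightarrow>
     (\<forall>J. J \<subseteq> {1..n} \<and> J \<noteq> {} \<and> J \<noteq> {1..n} \<longrightarrow>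
        (\<exists>i\<in>J. \<exists>j\<in>{1..n} - J. c i j \<noteq> 0))"

text \<open>Cartan matrix of a complex simple Lie algebra (finite type): an indecomposable
  generalized Cartan matrix which is symmetrizable, D c symmetric with D positive diagonal,
  and D c positive definite.\<close>

definition simple_cartan_matrix :: "nat \<Rightarrow> (nat \<Rightarrow> nat \<Rightarrow> int) \<Rightarrow> bool" where
  "simple_cartan_matrix n c \<longleftrightarrow>
     n \<ge> 1 \<and> generalized_cartan n c \<and> indecomposable_matrix n c \<and>
     (\<exists>d :: nat \<Rightarrow> real.
        (\<forall>i\<in>{1..n}. d i > 0) \<and>
        (\<forall>i\<in>{1..n}. \<forall>j\<in>{1..n}. d i * of_int (c i j) = d j * of_int (c j i)) \<and>
        (\<forall>x :: nat \<Rightarrow> real. (\<exists>i\<in>{1..n}. x i \<noteq> 0) \<longrightarrow>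
           (\<Sum>i\<in>{1..n}. \<Sum>j\<in>{1..n}. x i * d i * of_int (c i j) * x j) > 0))"

text \<open>An I-tuple of partitions is given by multiplicities: m i a = number of rows of
  length a (a > 0) of the partition mu^(i).\<close>

definition partition_tuple :: "nat \<Rightarrow> (nat \<Rightarrow> nat \<Rightarrow> nat) \<Rightarrow> bool" where
  "partition_tuple n m \<longleftrightarrow> (\<forall>i\<in>{1..n}. m i 0 = 0 \<and> finite {a. m i a \<noteq> 0})"

definition psize :: "(nat \<Rightarrow> nat \<Rightarrow> nat) \<Rightarrow> nat \<Rightarrow> nat" where
  "psize m i = (\<Sum>a\<in>{a. 0 < a \<and> m i a \<noteq> 0}. a * m i a)"

definition rowset :: "(nat \<Rightarrow> nat \<Rightarrow> nat) \<Rightarrow> nat \<Rightarrow> (nat \<times> nat) set" where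
  "rowset m i = {(a, u). 0 < a \<and> 1 \<le> u \<and> u \<le> m i a}"

definition lex_less :: "nat \<times> nat \<Rightarrow> nat \<times> nat \<Rightarrow> bool" where
  "lex_less p q \<longleftrightarrow> fst p < fst q \<or> (fst p = fst q \<and> snd p < snd q)"

definition Pfun :: "nat \<Rightarrow> (nat \<Rightarrow> nat \<Rightarrow> int) \<Rightarrow> (nat \<Rightarrow> nat \<Rightarrow> nat) \<Rightarrow> int" where
  "Pfun n c m =
     2 * (\<Sum>i\<in>{1..n}. \<Sum>pq\<in>{(p, q). p \<in> rowset m i \<and> q \<in> rowset m i \<and> lex_less p q}.
            int (min (fst (fst pq)) (fst (snd pq))))
     - (\<Sum>i\<in>{1..n}. \<Sum>j\<in>{i<..n}. \<Sum>p\<in>rowset m i. \<Sum>q\<in>rowset m j.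
            min (\<bar>c j i\<bar> * int (fst p)) (\<bar>c i j\<bar> * int (fst q)))"

end

theory Submission
  imports Defs
begin

text \<open>
  Choose a symmetrizer \<open>d\<close> of the Cartan matrix, so that \<open>S i j = c i j / d j\<close> is symmetric
  and positive definite, and give each row \<open>(a, u)\<close> of \<open>\<mu>\<^sup>(\<^sup>i\<^sup>)\<close> the weight \<open>x = d i * a\<close>.
  The sum of \<open>S i j * min x y\<close> over all pairs of rows is positive: peeling off the smallest
  weight \<open>t\<close> splits it into \<open>t\<close> times the quadratic form of \<open>S\<close> at the vector of row counts,
  plus a sum of the same kind over the remaining rows with weights lowered by \<open>t\<close>.
  Because \<open>d i * c i j = d j * c j i\<close>, a diagonal block of this sum contributes \<open>2 min a b\<close>
  per pair of rows and an off-diagonal pair of blocks \<open>-2 min (\<bar>c j i\<bar> a) (\<bar>c i j\<bar> b)\<close>,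
  so the sum equals \<open>2 (P(\<mu>) + \<Sum>\<^sub>i |\<mu>\<^sup>(\<^sup>i\<^sup>)|)\<close>.
\<close>

definition pos_def_on :: "'i set \<Rightarrow> ('i \<Rightarrow> 'i \<Rightarrow> real) \<Rightarrow> bool" where
  "pos_def_on I B \<longleftrightarrow>
     (\<forall>z. (\<exists>i\<in>I. z i \<noteq> 0) \<longrightarrow> (\<Sum>i\<in>I. \<Sum>j\<in>I. z i * B i j * z j) > 0)"

lemma pos_def_on_nonneg:
  assumes "pos_def_on I B"
  shows "(\<Sum>i\<in>I. \<Sum>j\<in>I. z i * B i j * z j) \<ge> 0"
proof (cases "\<exists>i\<in>I. z i \<noteq> 0")
  case True
  then show ?thesis using assms unfolding pos_def_on_def by (simp add: less_imp_le)
next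
  case False
  then show ?thesis by simp
qed

lemma sum_sum_by_fibres:
  fixes B :: "'i \<Rightarrow> 'i \<Rightarrow> real"
  assumes "finite X" "finite I" "v ` X \<subseteq> I"
  shows "(\<Sum>e\<in>X. \<Sum>f\<in>X. B (v e) (v f)) =
    (\<Sum>i\<in>I. \<Sum>j\<in>I. real (card {e\<in>X. v e = i}) * B i j * real (card {e\<in>X. v e = j}))"
proof -
  have fibres: "(\<Sum>e\<in>X. g (v e)) = (\<Sum>i\<in>I. real (card {e\<in>X. v e = i}) * g i)"
    for g :: "'i \<Rightarrow> real"
  proof -
    have "(\<Sum>e\<in>X. g (v e)) = (\<Sum>i\<in>I. \<Sum>e\<in>{e\<in>X. v e = i}. g (v e))"
      using assms by (intro sum.group[symmetric]) auto
    then show ?thesis by simp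
  qed
  have "(\<Sum>e\<in>X. \<Sum>f\<in>X. B (v e) (v f))
      = (\<Sum>e\<in>X. \<Sum>j\<in>I. real (card {f\<in>X. v f = j}) * B (v e) j)"
    by (simp only: fibres)
  also have "\<dots> = (\<Sum>i\<in>I. real (card {e\<in>X. v e = i}) *
                     (\<Sum>j\<in>I. real (card {f\<in>X. v f = j}) * B i j))"
    by (rule fibres)
  finally show ?thesis by (simp add: sum_distrib_left mult_ac)
qed

lemma min_kernel_split:
  fixes B :: "'i \<Rightarrow> 'i \<Rightarrow> real" and x :: "'e \<Rightarrow> real"
  assumes fin: "finite X" and le: "\<forall>e\<in>X. t \<le> x e"
  shows "(\<Sum>e\<in>X. \<Sum>f\<in>X. B (v e) (v f) * min (x e) (x f)) =
    t * (\<Sum>e\<in>X. \<Sum>f\<in>X. B (v e) (v f)) +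
    (\<Sum>e\<in>{e\<in>X. t < x e}. \<Sum>f\<in>{e\<in>X. t < x e}. B (v e) (v f) * min (x e - t) (x f - t))"
proof -
  define X' where "X' = {e\<in>X. t < x e}"
  define g where "g = (\<lambda>(e, f). B (v e) (v f) * min (x e - t) (x f - t))"
  have vanish: "\<forall>p \<in> X \<times> X - X' \<times> X'. g p = 0"
    \<comment> \<open>one entry of \<open>p\<close> has the minimal weight \<open>t\<close>\<close>
    using le by (fastforce simp: X'_def g_def min_def not_less split: if_splits)
  have "(\<Sum>e\<in>X. \<Sum>f\<in>X. B (v e) (v f) * min (x e) (x f)) =
      (\<Sum>e\<in>X. \<Sum>f\<in>X. t * B (v e) (v f) + B (v e) (v f) * min (x e - t) (x f - t))"
    by (intro sum.cong refl) (auto simp: min_def algebra_simps)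
  also have "\<dots> = t * (\<Sum>e\<in>X. \<Sum>f\<in>X. B (v e) (v f)) +
      (\<Sum>e\<in>X. \<Sum>f\<in>X. B (v e) (v f) * min (x e - t) (x f - t))"
    by (simp add: sum.distrib sum_distrib_left)
  also have "(\<Sum>e\<in>X. \<Sum>f\<in>X. B (v e) (v f) * min (x e - t) (x f - t)) = sum g (X \<times> X)"
    by (simp add: sum.cartesian_product g_def)
  also have "sum g (X \<times> X) = sum g (X' \<times> X')"
    using fin vanish by (intro sum.mono_neutral_right) (auto simp: X'_def)
  finally show ?thesis by (simp add: sum.cartesian_product g_def X'_def)
qed

lemma min_kernel_nonneg:
  fixes B :: "'i \<Rightarrow> 'i \<Rightarrow> real" and x :: "'e \<Rightarrow> real"
  assumes "pos_def_on I B" "finite I"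
  shows "finite X \<Longrightarrow> v ` X \<subseteq> I \<Longrightarrow> \<forall>e\<in>X. x e \<ge> 0 \<Longrightarrow>
    (\<Sum>e\<in>X. \<Sum>f\<in>X. B (v e) (v f) * min (x e) (x f)) \<ge> 0"
proof (induction X arbitrary: x rule: finite_psubset_induct)
  case (psubset X)
  show ?case
  proof (cases "X = {}")
    case False
    define t where "t = Min (x ` X)"
    have "t \<in> x ` X" using psubset.hyps False unfolding t_def by simp
    then obtain e0 where "e0 \<in> X" "x e0 = t" by blast
    have t: "t \<ge> 0" "\<forall>e\<in>X. t \<le> x e"
      using psubset \<open>e0 \<in> X\<close> \<open>x e0 = t\<close> unfolding t_def by auto
    have "{e\<in>X. t < x e} \<subset> X" using \<open>e0 \<in> X\<close> \<open>x e0 = t\<close> by auto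
    then have "(\<Sum>e\<in>{e\<in>X. t < x e}. \<Sum>f\<in>{e\<in>X. t < x e}.
        B (v e) (v f) * min (x e - t) (x f - t)) \<ge> 0"
      using psubset by (intro psubset.IH) auto
    moreover have "(\<Sum>e\<in>X. \<Sum>f\<in>X. B (v e) (v f)) \<ge> 0"
      using sum_sum_by_fibres[of X I v B] pos_def_on_nonneg[OF assms(1)] psubset assms(2)
      by simp
    ultimately show ?thesis
      using min_kernel_split[where B=B and v=v, OF psubset.hyps t(2)] t(1) by simp
  qed simp
qed

lemma min_kernel_pos:
  fixes B :: "'i \<Rightarrow> 'i \<Rightarrow> real" and x :: "'e \<Rightarrow> real"
  assumes pd: "pos_def_on I B" and "finite I"
    and X: "finite X" "X \<noteq> {}" "v ` X \<subseteq> I" and x: "\<forall>e\<in>X. x e > 0"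
  shows "(\<Sum>e\<in>X. \<Sum>f\<in>X. B (v e) (v f) * min (x e) (x f)) > 0"
proof -
  define t where "t = Min (x ` X)"
  have "t \<in> x ` X" using X unfolding t_def by simp
  then obtain e0 where "e0 \<in> X" "x e0 = t" by blast
  have t: "t > 0" "\<forall>e\<in>X. t \<le> x e"
    using X x \<open>e0 \<in> X\<close> \<open>x e0 = t\<close> unfolding t_def by auto
  have "\<exists>i\<in>I. real (card {e\<in>X. v e = i}) \<noteq> 0"
    using \<open>e0 \<in> X\<close> X by (intro bexI[of _ "v e0"]) auto
  then have "(\<Sum>i\<in>I. \<Sum>j\<in>I. real (card {e\<in>X. v e = i}) * B i j * real (card {e\<in>X. v e = j})) > 0"
    by (rule pd[unfolded pos_def_on_def, rule_format])
  then have "(\<Sum>e\<in>X. \<Sum>f\<in>X. B (v e) (v f)) > 0"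
    using sum_sum_by_fibres[of X I v B] X \<open>finite I\<close> by simp
  moreover have "(\<Sum>e\<in>{e\<in>X. t < x e}. \<Sum>f\<in>{e\<in>X. t < x e}.
      B (v e) (v f) * min (x e - t) (x f - t)) \<ge> 0"
    using X by (intro min_kernel_nonneg[OF pd \<open>finite I\<close>]) auto
  ultimately show ?thesis
    using min_kernel_split[where B=B and v=v, OF X(1) t(2)] t(1) by (simp add: add_pos_nonneg)
qed

lemma simple_cartan_symmetrizer:
  assumes "simple_cartan_matrix n c"
  obtains d :: "nat \<Rightarrow> real"
  where "\<forall>i\<in>{1..n}. 0 < d i"
    and "\<forall>i\<in>{1..n}. \<forall>j\<in>{1..n}. d i * of_int (c i j) = d j * of_int (c j i)"
    and "pos_def_on {1..n} (\<lambda>i j. of_int (c i j) / d j)"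
proof -
  obtain d :: "nat \<Rightarrow> real" where d_pos: "\<forall>i\<in>{1..n}. 0 < d i"
    and d_sym: "\<forall>i\<in>{1..n}. \<forall>j\<in>{1..n}. d i * of_int (c i j) = d j * of_int (c j i)"
    and d_pd: "\<forall>x. (\<exists>i\<in>{1..n}. x i \<noteq> 0) \<longrightarrow>
                 (\<Sum>i\<in>{1..n}. \<Sum>j\<in>{1..n}. x i * d i * of_int (c i j) * x j) > 0"
    using assms unfolding simple_cartan_matrix_def by blast
  have "pos_def_on {1..n} (\<lambda>i j. of_int (c i j) / d j)"
    unfolding pos_def_on_def
  proof (intro allI impI)
    fix z :: "nat \<Rightarrow> real"
    assume "\<exists>i\<in>{1..n}. z i \<noteq> 0"
    then have "\<exists>i\<in>{1..n}. z i / d i \<noteq> 0"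
      using d_pos by force
    then have "(\<Sum>i\<in>{1..n}. \<Sum>j\<in>{1..n}. z i / d i * d i * of_int (c i j) * (z j / d j)) > 0"
      by (rule d_pd[rule_format])
    also have "(\<Sum>i\<in>{1..n}. \<Sum>j\<in>{1..n}. z i / d i * d i * of_int (c i j) * (z j / d j))
        = (\<Sum>i\<in>{1..n}. \<Sum>j\<in>{1..n}. z i * (of_int (c i j) / d j) * z j)"
      using d_pos by (intro sum.cong refl) force
    finally show "(\<Sum>i\<in>{1..n}. \<Sum>j\<in>{1..n}. z i * (of_int (c i j) / d j) * z j) > 0" .
  qed
  with d_pos d_sym show thesis by (rule that)
qed

lemma symmetrized_min_eq:
  fixes di dj cij cji a b :: real
  assumes "0 < di" "0 < dj" "di * cij = dj * cji" "cij \<le> 0"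
  shows "cij / dj * min (di * a) (dj * b) = - min (\<bar>cji\<bar> * a) (\<bar>cij\<bar> * b)"
proof -
  define k where "k = - cij / dj"
  have k: "0 \<le> k" "cji = - k * di" "cij = - k * dj"
    using assms by (auto simp: k_def field_simps divide_nonpos_pos)
  then have "\<bar>cji\<bar> = k * di" "\<bar>cij\<bar> = k * dj"
    using assms by (simp_all add: abs_mult)
  moreover have "k * min (di * a) (dj * b) = min (k * di * a) (k * dj * b)"
    using k(1) by (simp add: min_mult_distrib_left mult.assoc)
  ultimately show ?thesis
    using assms(2) by (simp add: k_def)
qed

lemma lex_less_irrefl: "\<not> lex_less p p"
  by (simp add: lex_less_def)

lemma lex_less_asym: "lex_less p q \<Longrightarrow> \<not> lex_less q p"
  by (auto simp: lex_less_def)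

lemma lex_less_linear: "p \<noteq> q \<Longrightarrow> lex_less p q \<or> lex_less q p"
  by (cases p; cases q) (auto simp: lex_less_def)

lemma sum_square_lex_split:
  fixes f :: "nat \<times> nat \<Rightarrow> nat \<times> nat \<Rightarrow> 'a :: comm_semiring_1"
  assumes "finite R" and f_sym: "\<And>p q. f p q = f q p"
  shows "(\<Sum>p\<in>R. \<Sum>q\<in>R. f p q) =
    2 * (\<Sum>pq\<in>{(p, q). p \<in> R \<and> q \<in> R \<and> lex_less p q}. f (fst pq) (snd pq)) + (\<Sum>p\<in>R. f p p)"
proof -
  define L where "L = {(p, q). p \<in> R \<and> q \<in> R \<and> lex_less p q}"
  define L' where "L' = {(p, q). p \<in> R \<and> q \<in> R \<and> lex_less q p}"
  define D where "D = (\<lambda>p. (p, p)) ` R"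
  define g where "g = (\<lambda>pq. f (fst pq) (snd pq))"
  have RR: "R \<times> R = L \<union> (L' \<union> D)"
  proof (intro equalityI subsetI)
    fix pq assume "pq \<in> R \<times> R"
    then show "pq \<in> L \<union> (L' \<union> D)"
      using lex_less_linear[of "fst pq" "snd pq"] unfolding L_def L'_def D_def
      by (cases pq) (auto simp: image_iff)
  qed (auto simp: L_def L'_def D_def)
  have "finite (L \<union> (L' \<union> D))"
    unfolding RR[symmetric] using \<open>finite R\<close> by simp
  then have fin: "finite L" "finite L'" "finite D"
    by simp_all
  have disj: "L \<inter> (L' \<union> D) = {}" "L' \<inter> D = {}"
    unfolding L_def L'_def D_def using lex_less_asym lex_less_irrefl by auto
  have "sum g L' = sum g L"
    by (rule sum.reindex_bij_witness[where i="\<lambda>(p, q). (q, p)" and j="\<lambda>(p, q). (q, p)"])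
       (auto simp: L_def L'_def g_def f_sym)
  moreover have "sum g D = (\<Sum>p\<in>R. f p p)"
    unfolding D_def by (subst sum.reindex) (auto simp: inj_on_def g_def)
  moreover have "(\<Sum>p\<in>R. \<Sum>q\<in>R. f p q) = sum g L + (sum g L' + sum g D)"
    unfolding sum.cartesian_product g_def RR using fin disj
    by (simp add: sum.union_disjoint split_def)
  ultimately show ?thesis
    by (simp add: L_def g_def mult_2 add.assoc)
qed

lemma sum_square_eq_diag_plus_pairs:
  fixes g :: "nat \<Rightarrow> nat \<Rightarrow> 'a :: comm_monoid_add"
  shows "(\<Sum>i\<in>{1..n}. \<Sum>j\<in>{1..n}. g i j) =
    (\<Sum>i\<in>{1..n}. g i i) + (\<Sum>i\<in>{1..n}. \<Sum>j\<in>{i<..n}. g i j + g j i)"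
proof (induction n)
  case (Suc n)
  let ?new = "\<Sum>i\<in>{1..n}. g i (Suc n) + g (Suc n) i"
  have "{i<..Suc n} = insert (Suc n) {i<..n}" if "i \<le> n" for i
    using that by auto
  then have pairs: "(\<Sum>i\<in>{1..Suc n}. \<Sum>j\<in>{i<..Suc n}. g i j + g j i) =
      (\<Sum>i\<in>{1..n}. (g i (Suc n) + g (Suc n) i) + (\<Sum>j\<in>{i<..n}. g i j + g j i))"
    by (simp add: atLeastAtMostSuc_conv)
  have "(\<Sum>i\<in>{1..Suc n}. \<Sum>j\<in>{1..Suc n}. g i j) =
      (\<Sum>i\<in>{1..n}. \<Sum>j\<in>{1..n}. g i j) + ?new + g (Suc n) (Suc n)"
    by (simp add: atLeastAtMostSuc_conv sum.distrib ac_simps)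
  also have "\<dots> = (\<Sum>i\<in>{1..n}. g i i) + (\<Sum>i\<in>{1..n}. \<Sum>j\<in>{i<..n}. g i j + g j i)
      + ?new + g (Suc n) (Suc n)"
    by (simp only: Suc.IH)
  also have "\<dots> = (\<Sum>i\<in>{1..Suc n}. g i i) + (\<Sum>i\<in>{1..Suc n}. \<Sum>j\<in>{i<..Suc n}. g i j + g j i)"
    unfolding pairs by (simp add: atLeastAtMostSuc_conv sum.distrib ac_simps)
  finally show ?case .
qed simp

lemma rowset_eq_Sigma: "rowset m i = Sigma {a. 0 < a \<and> m i a \<noteq> 0} (\<lambda>a. {1..m i a})"
  unfolding rowset_def by auto

lemma finite_rowset: "finite {a. m i a \<noteq> 0} \<Longrightarrow> finite (rowset m i)"
  unfolding rowset_eq_Sigma by (rule finite_SigmaI) auto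

lemma psize_eq_sum_rowset:
  assumes "finite {a. m i a \<noteq> 0}"
  shows "psize m i = (\<Sum>p\<in>rowset m i. fst p)"
proof -
  have "(\<Sum>p\<in>rowset m i. fst p) = (\<Sum>a\<in>{a. 0 < a \<and> m i a \<noteq> 0}. \<Sum>u\<in>{1..m i a}. a)"
    unfolding rowset_eq_Sigma using assms by (subst sum.Sigma) (auto simp: split_def)
  then show ?thesis
    unfolding psize_def by (simp add: mult.commute)
qed

definition row_min_sum :: "(nat \<Rightarrow> nat \<Rightarrow> nat) \<Rightarrow> nat \<Rightarrow> nat" where
  "row_min_sum m i = (\<Sum>p\<in>rowset m i. \<Sum>q\<in>rowset m i. min (fst p) (fst q))"

definition row_coupling :: "(nat \<Rightarrow> nat \<Rightarrow> int) \<Rightarrow> (nat \<Rightarrow> nat \<Rightarrow> nat) \<Rightarrow> nat \<Rightarrow> nat \<Rightarrow> int" where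
  "row_coupling c m i j =
     (\<Sum>p\<in>rowset m i. \<Sum>q\<in>rowset m j. min (\<bar>c j i\<bar> * int (fst p)) (\<bar>c i j\<bar> * int (fst q)))"

lemma Pfun_plus_psize_eq:
  assumes "partition_tuple n m"
  shows "Pfun n c m + (\<Sum>i\<in>{1..n}. int (psize m i)) =
    (\<Sum>i\<in>{1..n}. int (row_min_sum m i)) - (\<Sum>i\<in>{1..n}. \<Sum>j\<in>{i<..n}. row_coupling c m i j)"
proof -
  have "row_min_sum m i =
      2 * (\<Sum>pq\<in>{(p, q). p \<in> rowset m i \<and> q \<in> rowset m i \<and> lex_less p q}.
             min (fst (fst pq)) (fst (snd pq))) + psize m i"
    if "i \<in> {1..n}" for i
    using assms that unfolding partition_tuple_def row_min_sum_def
    by (simp add: sum_square_lex_split[where f="\<lambda>p q. min (fst p) (fst q)"] finite_rowset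
        psize_eq_sum_rowset min.commute)
  then show ?thesis
    unfolding Pfun_def row_coupling_def by (simp add: sum.distrib sum_distrib_left)
qed

lemma min_kernel_rows_eq:
  assumes "generalized_cartan n c" "partition_tuple n m"
    and d_pos: "\<forall>i\<in>{1..n}. 0 < d i"
    and d_sym: "\<forall>i\<in>{1..n}. \<forall>j\<in>{1..n}. d i * of_int (c i j) = d j * of_int (c j i)"
  shows "(\<Sum>e\<in>Sigma {1..n} (rowset m). \<Sum>f\<in>Sigma {1..n} (rowset m).
      of_int (c (fst e) (fst f)) / d (fst f) * min (d (fst e) * real (fst (snd e))) (d (fst f) * real (fst (snd f))))
    = 2 * ((\<Sum>i\<in>{1..n}. real (row_min_sum m i)) -
           (\<Sum>i\<in>{1..n}. \<Sum>j\<in>{i<..n}. real_of_int (row_coupling c m i j)))"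
proof -
  define G where "G i j = (\<Sum>p\<in>rowset m i. \<Sum>q\<in>rowset m j.
      of_int (c i j) / d j * min (d i * real (fst p)) (d j * real (fst q)))" for i j
  have fin: "\<forall>i\<in>{1..n}. finite (rowset m i)"
    using assms(2) finite_rowset unfolding partition_tuple_def by blast
  have diag: "G i i = 2 * real (row_min_sum m i)" if "i \<in> {1..n}" for i
  proof -
    have "c i i = 2" "0 < d i"
      using assms(1) d_pos that unfolding generalized_cartan_def by auto
    then have "of_int (c i i) / d i * min (d i * real a) (d i * real b) = 2 * real (min a b)" for a b
      by (simp add: min_mult_distrib_left of_nat_min)
    then show ?thesis
      unfolding G_def row_min_sum_def by (simp add: sum_distrib_left)
  qed
  have pair: "G i j + G j i = - 2 * real_of_int (row_coupling c m i j)"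
    if "i \<in> {1..n}" "j \<in> {i<..n}" for i j
  proof -
    have "i \<noteq> j" "j \<in> {1..n}" using that by auto
    then have "c i j \<le> 0" "c j i \<le> 0"
      using assms(1) that(1) unfolding generalized_cartan_def by auto
    then have "of_int (c i j) / d j * min (d i * a) (d j * b) =
               - min (\<bar>of_int (c j i)\<bar> * a) (\<bar>of_int (c i j)\<bar> * b)"
      and "of_int (c j i) / d i * min (d j * b) (d i * a) =
               - min (\<bar>of_int (c j i)\<bar> * a) (\<bar>of_int (c i j)\<bar> * b)" for a b
      using symmetrized_min_eq[of "d i" "d j" "of_int (c i j)" "of_int (c j i)" a b]
        symmetrized_min_eq[of "d j" "d i" "of_int (c j i)" "of_int (c i j)" b a]
        d_pos d_sym that(1) \<open>j \<in> {1..n}\<close> by (simp_all add: min.commute)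
    then show ?thesis
      unfolding G_def row_coupling_def
      by (simp add: sum.swap[of _ "rowset m j"] of_int_min sum_negf)
  qed
  have "(\<Sum>e\<in>Sigma {1..n} (rowset m). \<Sum>f\<in>Sigma {1..n} (rowset m).
      of_int (c (fst e) (fst f)) / d (fst f) * min (d (fst e) * real (fst (snd e))) (d (fst f) * real (fst (snd f))))
      = (\<Sum>i\<in>{1..n}. \<Sum>j\<in>{1..n}. G i j)"
  proof -
    have regroup: "(\<Sum>e\<in>Sigma {1..n} (rowset m). h e) = (\<Sum>i\<in>{1..n}. \<Sum>p\<in>rowset m i. h (i, p))"
      for h :: "nat \<times> nat \<times> nat \<Rightarrow> real"
      using fin by (subst sum.Sigma) (auto simp: split_def)
    show ?thesis
      unfolding regroup G_def by (subst sum.swap) simp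
  qed
  also have "\<dots> = (\<Sum>i\<in>{1..n}. G i i) + (\<Sum>i\<in>{1..n}. \<Sum>j\<in>{i<..n}. G i j + G j i)"
    by (rule sum_square_eq_diag_plus_pairs)
  also have "\<dots> = 2 * ((\<Sum>i\<in>{1..n}. real (row_min_sum m i)) -
           (\<Sum>i\<in>{1..n}. \<Sum>j\<in>{i<..n}. real_of_int (row_coupling c m i j)))"
    by (simp add: diag pair sum_distrib_left sum_negf right_diff_distrib)
  finally show ?thesis .
qed

theorem lemmaA4:
  fixes n :: nat and c :: "nat \<Rightarrow> nat \<Rightarrow> int" and m :: "nat \<Rightarrow> nat \<Rightarrow> nat"
  assumes "simple_cartan_matrix n c"
    and "partition_tuple n m"
    and "\<exists>i\<in>{1..n}. \<exists>a. m i a \<noteq> 0"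
  shows "Pfun n c m > - (\<Sum>i\<in>{1..n}. int (psize m i))"
proof -
  obtain d where d_pos: "\<forall>i\<in>{1..n}. 0 < d i"
    and d_sym: "\<forall>i\<in>{1..n}. \<forall>j\<in>{1..n}. d i * of_int (c i j) = d j * of_int (c j i)"
    and pd: "pos_def_on {1..n} (\<lambda>i j. of_int (c i j) / d j)"
    using simple_cartan_symmetrizer[OF assms(1)] by blast
  define X where "X = Sigma {1..n} (rowset m)"
  have "finite X"
    using assms(2) finite_rowset unfolding X_def partition_tuple_def by blast
  obtain i a where "i \<in> {1..n}" "m i a \<noteq> 0"
    using assms(3) by blast
  then have "(i, a, 1) \<in> X"
    using assms(2) unfolding X_def rowset_def partition_tuple_def by (cases a) auto
  then have "X \<noteq> {}"
    by blast
  have "0 < (\<Sum>e\<in>X. \<Sum>f\<in>X. of_int (c (fst e) (fst f)) / d (fst f) *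
      min (d (fst e) * real (fst (snd e))) (d (fst f) * real (fst (snd f))))"
    using \<open>finite X\<close> \<open>X \<noteq> {}\<close> d_pos
    by (intro min_kernel_pos[OF pd]) (auto simp: X_def rowset_def)
  also have "\<dots> = 2 * ((\<Sum>i\<in>{1..n}. real (row_min_sum m i)) -
      (\<Sum>i\<in>{1..n}. \<Sum>j\<in>{i<..n}. real_of_int (row_coupling c m i j)))"
    using assms(1) d_pos d_sym unfolding X_def simple_cartan_matrix_def
    by (intro min_kernel_rows_eq assms(2)) auto
  also have "\<dots> = real_of_int (2 * (Pfun n c m + (\<Sum>i\<in>{1..n}. int (psize m i))))"
    unfolding Pfun_plus_psize_eq[OF assms(2)] by simp
  finally have "0 < 2 * (Pfun n c m + (\<Sum>i\<in>{1..n}. int (psize m i)))"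
    by (simp only: of_int_0_less_iff)
  then show ?thesis
    by simp
qed

end
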